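(* Let $\mathfrak g$ be a nonsemisimple complex Lie algebra, $\mathfrak p$ a nonperfect ideal of $\mathfrak g$, and $\phi:\mathfrak p\to\mathbb C$ a Lie algebra homomorphism. If $\mathfrak g$ admits a bland irreducible quasi-Whittaker module of type $\phi$, then $\phi$ is extendable.
   Context: A Lie algebra homomorphism to $\mathbb C$ is a linear map vanishing on the derived subalgebra. For a $\mathfrak g$-module $V$, $V_\phi=\{v\in V: pv=\phi(p)v\ \forall p\in\mathfrak p\}$ (quasi-Whittaker vectors of type $\phi$); $V$ is a quasi-Whittaker module of type $\phi$ if generated by an element of $V_\phi$; an irreducible such $V$ is bland if $\dim V_\phi=1$. The Whittaker annihilator is $\mathfrak g^{\phi}=\{g\in\mathfrak g:\phi([g,p])=0\ \forall p\in\mathfrak p\}$. $\phi$ is extendable if there is a Lie algebra homomorphism $\phi':\mathfrak g^\phi\to\mathbb C$ with $\phi'|_{\mathfrak p}=\phi$. *)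

theory Defs
  imports "HOL-Analysis.Analysis"
begin

text \<open>A complex Lie algebra is the whole type 'g with scaling sg and bracket br.\<close>

definition lie_algebra :: "(complex \<Rightarrow> 'g::ab_group_add \<Rightarrow> 'g) \<Rightarrow> ('g \<Rightarrow> 'g \<Rightarrow> 'g) \<Rightarrow> bool" where
  "lie_algebra sg br \<longleftrightarrow> vector_space sg \<and>
     (\<forall>x y z. br (x + y) z = br x z + br y z) \<and>
     (\<forall>c x y. br (sg c x) y = sg c (br x y)) \<and>
     (\<forall>x y z. br x (y + z) = br x y + br x z) \<and>
     (\<forall>c x y. br x (sg c y) = sg c (br x y)) \<and>
     (\<forall>x. br x x = 0) \<and>
     (\<forall>x y z. br x (br y z) + br y (br z x) + br z (br x y) = 0)"

definition lie_bracket_set :: "(complex \<Rightarrow> 'g::ab_group_add \<Rightarrow> 'g) \<Rightarrow> ('g \<Rightarrow> 'g \<Rightarrow> 'g) \<Rightarrow> 'g set \<Rightarrow> 'g set \<Rightarrow> 'g set" where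
  "lie_bracket_set sg br A B = module.span sg {br a b | a b. a \<in> A \<and> b \<in> B}"

definition lie_ideal :: "(complex \<Rightarrow> 'g::ab_group_add \<Rightarrow> 'g) \<Rightarrow> ('g \<Rightarrow> 'g \<Rightarrow> 'g) \<Rightarrow> 'g set \<Rightarrow> bool" where
  "lie_ideal sg br I \<longleftrightarrow> module.subspace sg I \<and> (\<forall>x y. y \<in> I \<longrightarrow> br x y \<in> I)"

primrec derived_series :: "(complex \<Rightarrow> 'g::ab_group_add \<Rightarrow> 'g) \<Rightarrow> ('g \<Rightarrow> 'g \<Rightarrow> 'g) \<Rightarrow> 'g set \<Rightarrow> nat \<Rightarrow> 'g set" where
  "derived_series sg br I 0 = I"
| "derived_series sg br I (Suc n) =
     lie_bracket_set sg br (derived_series sg br I n) (derived_series sg br I n)"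

definition lie_solvable :: "(complex \<Rightarrow> 'g::ab_group_add \<Rightarrow> 'g) \<Rightarrow> ('g \<Rightarrow> 'g \<Rightarrow> 'g) \<Rightarrow> 'g set \<Rightarrow> bool" where
  "lie_solvable sg br I \<longleftrightarrow> (\<exists>n. derived_series sg br I n = {0})"

definition lie_semisimple :: "(complex \<Rightarrow> 'g::ab_group_add \<Rightarrow> 'g) \<Rightarrow> ('g \<Rightarrow> 'g \<Rightarrow> 'g) \<Rightarrow> bool" where
  "lie_semisimple sg br \<longleftrightarrow> (\<forall>I. lie_ideal sg br I \<and> lie_solvable sg br I \<longrightarrow> I = {0})"

definition lie_perfect :: "(complex \<Rightarrow> 'g::ab_group_add \<Rightarrow> 'g) \<Rightarrow> ('g \<Rightarrow> 'g \<Rightarrow> 'g) \<Rightarrow> 'g set \<Rightarrow> bool" where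
  "lie_perfect sg br P \<longleftrightarrow> lie_bracket_set sg br P P = P"

definition lie_hom_to_C :: "(complex \<Rightarrow> 'g::ab_group_add \<Rightarrow> 'g) \<Rightarrow> ('g \<Rightarrow> 'g \<Rightarrow> 'g) \<Rightarrow> 'g set \<Rightarrow> ('g \<Rightarrow> complex) \<Rightarrow> bool" where
  "lie_hom_to_C sg br S f \<longleftrightarrow>
     (\<forall>x\<in>S. \<forall>y\<in>S. f (x + y) = f x + f y) \<and>
     (\<forall>c. \<forall>x\<in>S. f (sg c x) = c * f x) \<and>
     (\<forall>z\<in>lie_bracket_set sg br S S. f z = 0)"

definition lie_module :: "(complex \<Rightarrow> 'g::ab_group_add \<Rightarrow> 'g) \<Rightarrow> ('g \<Rightarrow> 'g \<Rightarrow> 'g) \<Rightarrow>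
    (complex \<Rightarrow> 'v::ab_group_add \<Rightarrow> 'v) \<Rightarrow> ('g \<Rightarrow> 'v \<Rightarrow> 'v) \<Rightarrow> bool" where
  "lie_module sg br sv act \<longleftrightarrow> vector_space sv \<and>
     (\<forall>x y v. act (x + y) v = act x v + act y v) \<and>
     (\<forall>c x v. act (sg c x) v = sv c (act x v)) \<and>
     (\<forall>x v w. act x (v + w) = act x v + act x w) \<and>
     (\<forall>c x v. act x (sv c v) = sv c (act x v)) \<and>
     (\<forall>x y v. act (br x y) v = act x (act y v) - act y (act x v))"

definition submodule :: "(complex \<Rightarrow> 'v::ab_group_add \<Rightarrow> 'v) \<Rightarrow> ('g \<Rightarrow> 'v \<Rightarrow> 'v) \<Rightarrow> 'v set \<Rightarrow> bool" where
  "submodule sv act W \<longleftrightarrow> module.subspace sv W \<and> (\<forall>x. \<forall>w\<in>W. act x w \<in> W)"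

definition irreducible_module :: "(complex \<Rightarrow> 'v::ab_group_add \<Rightarrow> 'v) \<Rightarrow> ('g \<Rightarrow> 'v \<Rightarrow> 'v) \<Rightarrow> bool" where
  "irreducible_module sv act \<longleftrightarrow> (UNIV :: 'v set) \<noteq> {0} \<and>
     (\<forall>W. submodule sv act W \<longrightarrow> W = {0} \<or> W = UNIV)"

definition generated_submodule :: "(complex \<Rightarrow> 'v::ab_group_add \<Rightarrow> 'v) \<Rightarrow> ('g \<Rightarrow> 'v \<Rightarrow> 'v) \<Rightarrow> 'v \<Rightarrow> 'v set" where
  "generated_submodule sv act w = \<Inter>{W. submodule sv act W \<and> w \<in> W}"

definition qw_vectors :: "('g \<Rightarrow> 'v \<Rightarrow> 'v) \<Rightarrow> (complex \<Rightarrow> 'v \<Rightarrow> 'v) \<Rightarrow> 'g set \<Rightarrow> ('g \<Rightarrow> complex) \<Rightarrow> 'v set" where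
  "qw_vectors act sv P phi = {v. \<forall>p\<in>P. act p v = sv (phi p) v}"

definition quasi_whittaker_module :: "(complex \<Rightarrow> 'v::ab_group_add \<Rightarrow> 'v) \<Rightarrow> ('g \<Rightarrow> 'v \<Rightarrow> 'v) \<Rightarrow> 'g set \<Rightarrow> ('g \<Rightarrow> complex) \<Rightarrow> bool" where
  "quasi_whittaker_module sv act P phi \<longleftrightarrow>
     (\<exists>w\<in>qw_vectors act sv P phi. generated_submodule sv act w = UNIV)"

definition bland :: "(complex \<Rightarrow> 'v::ab_group_add \<Rightarrow> 'v) \<Rightarrow> ('g \<Rightarrow> 'v \<Rightarrow> 'v) \<Rightarrow> 'g set \<Rightarrow> ('g \<Rightarrow> complex) \<Rightarrow> bool" where
  "bland sv act P phi \<longleftrightarrow> irreducible_module sv act \<and> quasi_whittaker_module sv act P phi \<and>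
     vector_space.dim sv (qw_vectors act sv P phi) = 1"

definition whittaker_annihilator :: "('g \<Rightarrow> 'g \<Rightarrow> 'g) \<Rightarrow> 'g set \<Rightarrow> ('g \<Rightarrow> complex) \<Rightarrow> 'g set" where
  "whittaker_annihilator br P phi = {g. \<forall>p\<in>P. phi (br g p) = 0}"

definition extendable :: "(complex \<Rightarrow> 'g::ab_group_add \<Rightarrow> 'g) \<Rightarrow> ('g \<Rightarrow> 'g \<Rightarrow> 'g) \<Rightarrow> 'g set \<Rightarrow> ('g \<Rightarrow> complex) \<Rightarrow> bool" where
  "extendable sg br P phi \<longleftrightarrow>
     (\<exists>phi'. lie_hom_to_C sg br (whittaker_annihilator br P phi) phi' \<and> (\<forall>p\<in>P. phi' p = phi p))"

end

theory Submission
  imports Defs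
begin

text \<open>The Whittaker annihilator maps \<open>V\<^sub>\<phi>\<close> into itself: for \<open>g\<close> in it, \<open>p \<in> P\<close> and
  \<open>v \<in> V\<^sub>\<phi>\<close> we have \<open>p(gv) = g(pv) + [p,g]v = \<phi>(p) gv\<close>, because \<open>[p,g] \<in> P\<close> acts on \<open>v\<close>
  by the scalar \<open>\<phi>([p,g]) = 0\<close>. If \<open>V\<^sub>\<phi>\<close> is the line spanned by \<open>w\<close>, every element of the
  annihilator therefore acts on \<open>w\<close> by a scalar, and the scalars by which a set of operators
  acts on a common eigenvector form a character of that set; here it restricts to \<open>\<phi>\<close> on \<open>P\<close>.\<close>

lemma lie_algebra_bracket_antisym:
  assumes "lie_algebra sg br"
  shows "br y x = - br x y"
proof -
  have bilinear: "\<And>x y z. br (x + y) z = br x z + br y z" "\<And>x y z. br x (y + z) = br x y + br x z"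
    and alternating: "\<And>x. br x x = 0"
    using assms unfolding lie_algebra_def by auto
  have "0 = br (x + y) (x + y)" using alternating by simp
  also have "\<dots> = br x x + br y x + (br x y + br y y)" by (simp only: bilinear)
  also have "\<dots> = br x y + br y x" by (simp add: alternating)
  finally show ?thesis by (metis add_eq_0_iff)
qed

lemma lie_module_act_zero:
  assumes "lie_module sg br sv act"
  shows "act 0 v = 0"
proof -
  have "act (0 + 0) v = act 0 v + act 0 v"
    using assms unfolding lie_module_def by blast
  then show ?thesis by simp
qed

lemma lie_module_act_uminus:
  assumes "lie_module sg br sv act"
  shows "act (- x) v = - act x v"
proof -
  have "act (x + - x) v = act x v + act (- x) v"
    using assms unfolding lie_module_def by blast
  then have "act x v + act (- x) v = 0"
    using lie_module_act_zero[OF assms] by simp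
  then show ?thesis by (simp add: add_eq_0_iff)
qed

lemma act_mem_qw_vectors_if_whittaker_annihilator:
  assumes "lie_algebra sg br" and "lie_module sg br sv act" and "lie_ideal sg br P"
    and "g \<in> whittaker_annihilator br P phi" and "v \<in> qw_vectors act sv P phi"
  shows "act g v \<in> qw_vectors act sv P phi"
  unfolding qw_vectors_def
proof (intro CollectI ballI)
  interpret V: vector_space sv using \<open>lie_module sg br sv act\<close> unfolding lie_module_def by blast
  fix p assume "p \<in> P"
  have bracket_in_P: "br g p \<in> P"
    using \<open>p \<in> P\<close> \<open>lie_ideal sg br P\<close> unfolding lie_ideal_def by blast
  have "act (br g p) v = sv (phi (br g p)) v"
    using bracket_in_P \<open>v \<in> qw_vectors act sv P phi\<close> unfolding qw_vectors_def by blast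
  also have "\<dots> = 0"
    using \<open>p \<in> P\<close> \<open>g \<in> whittaker_annihilator br P phi\<close> \<open>lie_module sg br sv act\<close>
    unfolding whittaker_annihilator_def lie_module_def by simp
  finally have "act (br p g) v = 0"
    using lie_algebra_bracket_antisym[OF \<open>lie_algebra sg br\<close>, where x = g and y = p]
      lie_module_act_uminus[OF \<open>lie_module sg br sv act\<close>] by simp
  then have "act p (act g v) = act g (act p v)"
    using \<open>lie_module sg br sv act\<close> unfolding lie_module_def by (metis eq_iff_diff_eq_0)
  also have "\<dots> = sv (phi p) (act g v)"
    using \<open>p \<in> P\<close> \<open>v \<in> qw_vectors act sv P phi\<close> \<open>lie_module sg br sv act\<close>
    unfolding qw_vectors_def lie_module_def by simp
  finally show "act p (act g v) = sv (phi p) (act g v)" .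
qed

lemma (in vector_space) dim_eq_1_obtains_spanning_vector:
  assumes "dim S = 1"
  obtains w where "w \<in> S" "w \<noteq> 0" "S \<subseteq> range (\<lambda>c. scale c w)"
proof -
  obtain B where B: "B \<subseteq> S" "independent B" "S \<subseteq> span B" "card B = dim S"
    using basis_exists by blast
  then obtain w where "B = {w}" using assms by (metis card_1_singletonE)
  then show ?thesis
    using that B dependent_zero span_singleton by auto
qed

definition eigenvalue :: "(complex \<Rightarrow> 'v \<Rightarrow> 'v) \<Rightarrow> ('g \<Rightarrow> 'v \<Rightarrow> 'v) \<Rightarrow> 'v \<Rightarrow> 'g \<Rightarrow> complex" where
  "eigenvalue sv act w g = (SOME c. act g w = sv c w)"

lemma eigenvalue_eq:
  assumes "vector_space sv" and "w \<noteq> 0" and "act g w = sv c w"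
  shows "eigenvalue sv act w g = c"
proof -
  have "act g w = sv (eigenvalue sv act w g) w"
    unfolding eigenvalue_def using assms(3) by (rule someI)
  then show ?thesis
    using assms by (simp add: vector_space.scale_cancel_right)
qed

lemma lie_hom_to_C_eigenvalue:
  assumes "lie_algebra sg br" and "lie_module sg br sv act" and "w \<noteq> 0"
    and eigenvector: "\<And>g. g \<in> S \<Longrightarrow> \<exists>c. act g w = sv c w"
  shows "lie_hom_to_C sg br S (eigenvalue sv act w)"
proof -
  interpret G: vector_space sg using assms(1) unfolding lie_algebra_def by blast
  interpret V: vector_space sv using assms(2) unfolding lie_module_def by blast
  have act_add: "\<And>x y v. act (x + y) v = act x v + act y v"
    and act_scale: "\<And>c x v. act (sg c x) v = sv c (act x v)"
    and act_vscale: "\<And>c x v. act x (sv c v) = sv c (act x v)"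
    and act_bracket: "\<And>x y v. act (br x y) v = act x (act y v) - act y (act x v)"
    using assms(2) unfolding lie_module_def by auto
  note eigenvalue_eq = eigenvalue_eq[OF V.vector_space_axioms \<open>w \<noteq> 0\<close>, of act]
  have "G.subspace {z. act z w = 0}"
    unfolding G.subspace_def using lie_module_act_zero[OF assms(2)]
    by (auto simp: act_add act_scale)
  moreover have "{br a b | a b. a \<in> S \<and> b \<in> S} \<subseteq> {z. act z w = 0}"
  proof clarify
    fix a b assume "a \<in> S" "b \<in> S"
    then obtain ca cb where "act a w = sv ca w" "act b w = sv cb w"
      using eigenvector by metis
    then show "act (br a b) w = 0"
      by (simp add: act_bracket act_vscale mult.commute)
  qed
  ultimately have brackets_kill_w: "act z w = 0" if "z \<in> lie_bracket_set sg br S S" for z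
    using that G.span_minimal unfolding lie_bracket_set_def by blast
  show ?thesis
    unfolding lie_hom_to_C_def
  proof (intro conjI ballI allI)
    fix x y assume "x \<in> S" "y \<in> S"
    then obtain cx cy where x: "act x w = sv cx w" and y: "act y w = sv cy w"
      using eigenvector by metis
    then have "act (x + y) w = sv (cx + cy) w"
      by (simp add: act_add V.scale_left_distrib)
    then show "eigenvalue sv act w (x + y) = eigenvalue sv act w x + eigenvalue sv act w y"
      using eigenvalue_eq[OF x] eigenvalue_eq[OF y] eigenvalue_eq[of "x + y"] by simp
  next
    fix c x assume "x \<in> S"
    then obtain cx where x: "act x w = sv cx w" using eigenvector by metis
    then have "act (sg c x) w = sv (c * cx) w" by (simp add: act_scale)
    then show "eigenvalue sv act w (sg c x) = c * eigenvalue sv act w x"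
      using eigenvalue_eq[OF x] eigenvalue_eq[of "sg c x"] by simp
  next
    fix z assume "z \<in> lie_bracket_set sg br S S"
    then show "eigenvalue sv act w z = 0"
      using brackets_kill_w eigenvalue_eq[of z 0] by simp
  qed
qed

theorem lemma3p6:
  fixes sg :: "complex \<Rightarrow> 'g::ab_group_add \<Rightarrow> 'g" and br :: "'g \<Rightarrow> 'g \<Rightarrow> 'g"
    and P :: "'g set" and phi :: "'g \<Rightarrow> complex"
  assumes "lie_algebra sg br"
    and "\<not> lie_semisimple sg br"
    and "lie_ideal sg br P"
    and "\<not> lie_perfect sg br P"
    and "lie_hom_to_C sg br P phi"
    and "\<exists>(sv :: complex \<Rightarrow> 'v::ab_group_add \<Rightarrow> 'v) act.
           lie_module sg br sv act \<and> bland sv act P phi"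
  shows "extendable sg br P phi"
proof -
  obtain sv :: "complex \<Rightarrow> 'v \<Rightarrow> 'v" and act
    where module: "lie_module sg br sv act" and "bland sv act P phi"
    using assms(6) by blast
  interpret V: vector_space sv using module unfolding lie_module_def by blast
  have "V.dim (qw_vectors act sv P phi) = 1"
    using \<open>bland sv act P phi\<close> unfolding bland_def by simp
  then obtain w where w: "w \<in> qw_vectors act sv P phi" "w \<noteq> 0"
    and spans: "qw_vectors act sv P phi \<subseteq> range (\<lambda>c. sv c w)"
    by (rule V.dim_eq_1_obtains_spanning_vector)
  have "\<exists>c. act g w = sv c w" if "g \<in> whittaker_annihilator br P phi" for g
    using spans act_mem_qw_vectors_if_whittaker_annihilator[OF assms(1) module assms(3) that w(1)]
    by blast
  then have "lie_hom_to_C sg br (whittaker_annihilator br P phi) (eigenvalue sv act w)"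
    by (rule lie_hom_to_C_eigenvalue[OF assms(1) module \<open>w \<noteq> 0\<close>])
  moreover have "eigenvalue sv act w p = phi p" if "p \<in> P" for p
    using w(1) that eigenvalue_eq[OF V.vector_space_axioms \<open>w \<noteq> 0\<close>, of act p "phi p"]
    unfolding qw_vectors_def by blast
  ultimately show ?thesis
    unfolding extendable_def by blast
qed

end
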